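(* Let $\mu$ be a joint distribution of a triple $(X,A,Y)$ with $X\in\mathcal{X}\subseteq\mathbb{R}^d$, $A\in\{0,1\}$ with $\Pr(A=0),\Pr(A=1)>0$, and $Y\in[-1,1]$. Let $p\ge1$ and for $i\in\{0,1\}$ assume the infimum $\varepsilon^*_{p,\mu_i}:=\inf_f\varepsilon_{p,\mu_i}(f(X))$ over measurable $f$ is attained by some $f_i^*$. Let $h:\mathcal{X}\to\mathbb{R}$ be measurable, $\widehat{Y}=h(X)$, and suppose there is $\epsilon>0$ with $W_p(h_\sharp\mu_0,h_\sharp\mu_1)\leq\epsilon$. Then $$r_{p,\mu_0}(\widehat{Y})+r_{p,\mu_1}(\widehat{Y})\geq W_p({f_0^*}_\sharp\mu_0,{f_1^*}_\sharp\mu_1)-2(\varepsilon^*_{p,\mu_0}+\varepsilon^*_{p,\mu_1})-\epsilon,$$ and, provided the densities (w.r.t. Lebesgue measure) of $h_\sharp\mu_0,h_\sharp\mu_1$ are bounded above by a constant $C$, $\widehat{Y}$ satisfies $2\sqrt{C\epsilon}$-statistical parity, i.e. $\sup_{z\in\mathbb{R}}|\Pr_{\mu_0}(h(X)\le z)-\Pr_{\mu_1}(h(X)\le z)|\le2\sqrt{C\epsilon}$.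
   Context: For $a\in\{0,1\}$, $\mu_a$ is the conditional distribution of $(X,Y)$ given $A=a$. For a distribution $\nu$, $\varepsilon_{p,\nu}(\widehat{Y}):=\left(\mathbb{E}_\nu[|\widehat{Y}-Y|^p]\right)^{1/p}$, and the excess risk is $r_{p,\nu}(\widehat{Y}):=\varepsilon_{p,\nu}(\widehat{Y})-\varepsilon^*_{p,\nu}$. For a map $g$, $g_\sharp\nu$ is the pushforward distribution (distribution of $g(X)$ under $\nu$). $W_p$ is the $p$-Wasserstein distance on $\mathbb{R}$. *)

theory Defs
  imports "HOL-Probability.Probability"
begin

text \<open>Outcomes are triples (X, A, Y) with X in real^'d, A :: bool (False = group 0,
  True = group 1), Y real.\<close>

type_synonym 'd outcome = "(real^'d) \<times> bool \<times> real"

definition sample_space :: "'d::finite outcome measure" where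
  "sample_space = borel \<Otimes>\<^sub>M count_space UNIV \<Otimes>\<^sub>M borel"

definition cond_dist :: "'d::finite outcome measure \<Rightarrow> bool \<Rightarrow> 'd outcome measure" where
  "cond_dist \<mu> a = uniform_measure \<mu> {\<omega> \<in> space \<mu>. fst (snd \<omega>) = a}"

definition enn_root :: "real \<Rightarrow> ennreal \<Rightarrow> ennreal" where
  "enn_root p e = (if e = \<infinity> then \<infinity> else ennreal (enn2real e powr (1 / p)))"

definition lp_error :: "real \<Rightarrow> 'd::finite outcome measure \<Rightarrow> (real^'d \<Rightarrow> real) \<Rightarrow> ennreal" where
  "lp_error p \<nu> f = enn_root p (\<integral>\<^sup>+ \<omega>. ennreal (\<bar>f (fst \<omega>) - snd (snd \<omega>)\<bar> powr p) \<partial>\<nu>)"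

definition opt_lp_error :: "real \<Rightarrow> 'd::finite outcome measure \<Rightarrow> ennreal" where
  "opt_lp_error p \<nu> = (INF f \<in> borel_measurable borel. lp_error p \<nu> f)"

definition excess_risk :: "real \<Rightarrow> 'd::finite outcome measure \<Rightarrow> (real^'d \<Rightarrow> real) \<Rightarrow> ereal" where
  "excess_risk p \<nu> f = enn2ereal (lp_error p \<nu> f) - enn2ereal (opt_lp_error p \<nu>)"

definition push :: "'d::finite outcome measure \<Rightarrow> (real^'d \<Rightarrow> real) \<Rightarrow> real measure" where
  "push \<nu> g = distr \<nu> borel (\<lambda>\<omega>. g (fst \<omega>))"

definition couplings :: "real measure \<Rightarrow> real measure \<Rightarrow> (real \<times> real) measure set" where
  "couplings \<nu>1 \<nu>2 = {\<pi>. prob_space \<pi> \<and> sets \<pi> = sets (borel :: (real \<times> real) measure)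
      \<and> distr \<pi> borel fst = \<nu>1 \<and> distr \<pi> borel snd = \<nu>2}"

definition wasserstein :: "real \<Rightarrow> real measure \<Rightarrow> real measure \<Rightarrow> ennreal" where
  "wasserstein p \<nu>1 \<nu>2 = (INF \<pi> \<in> couplings \<nu>1 \<nu>2.
      enn_root p (\<integral>\<^sup>+ z. ennreal (\<bar>fst z - snd z\<bar> powr p) \<partial>\<pi>))"

end

theory Submission
  imports Defs
begin

text \<open>On the real line the quantile coupling is optimal for the cost \<open>\<bar>x - y\<bar>^p\<close>, \<open>p \<ge> 1\<close>.
  Taylor's formula writes \<open>\<bar>d\<bar>^p\<close> as a mixture over \<open>a \<ge> 0\<close> of the hinge functions
  \<open>max 0 (\<bar>d\<bar> - a)\<close>, so it suffices to treat the costs \<open>max 0 (x - y - a)\<close>. The expectation of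
  such a cost is the integral over \<open>s\<close> of \<open>P(Y \<le> s, s + a < X)\<close>, and this probability is at
  least \<open>F\<^sub>Y(s) - F\<^sub>X(s + a)\<close>, the value attained by the quantile coupling. Hence \<open>W\<^sub>p\<close> is
  the \<open>L\<^sup>p\<close> distance between quantile functions on \<open>(0,1)\<close>, and Minkowski's inequality makes
  it a metric. As \<open>(u(X), v(X))\<close> couples the laws of \<open>u(X)\<close> and \<open>v(X)\<close>, their distance is at
  most \<open>\<parallel>u(X) - Y\<parallel>\<^sub>p + \<parallel>Y - v(X)\<parallel>\<^sub>p\<close>; the triangle inequality through the laws of \<open>h(X)\<close>
  under \<open>\<mu>\<^sub>0\<close> and \<open>\<mu>\<^sub>1\<close> then gives the risk bound.

  For statistical parity: if the CDFs of \<open>h(X)\<close> under \<open>\<mu>\<^sub>0\<close> and \<open>\<mu>\<^sub>1\<close> differ by \<open>\<delta>\<close> at \<open>z\<close>,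
  the density bound \<open>C\<close> forces the quantile functions to differ by at least \<open>\<delta>/(2C)\<close> on a set
  of levels of measure \<open>\<delta>/2\<close>, so \<open>\<epsilon> \<ge> W\<^sub>p \<ge> \<delta>\<^sup>2/(4C)\<close>.\<close>

section \<open>Minkowski inequality\<close>

lemma enn_root_mono:
  assumes "p > 0" "a \<le> b"
  shows "enn_root p a \<le> enn_root p b"
proof (cases "b = \<infinity>")
  case False
  then have "a \<noteq> \<infinity>" using assms(2) by (auto simp: top_unique)
  with False assms show ?thesis
    by (auto simp: enn_root_def top.not_eq_extremum intro!: ennreal_leI powr_mono2 enn2real_mono)
qed (simp add: enn_root_def)

lemma enn_root_powr:
  assumes "p > 0" "x \<ge> 0"
  shows "enn_root p (ennreal (x powr p)) = ennreal x"
  using assms by (simp add: enn_root_def powr_powr)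

lemma enn_root_le_imp_le_powr:
  assumes p: "p > 0" and \<epsilon>: "\<epsilon> \<ge> 0" and le: "enn_root p I \<le> ennreal \<epsilon>"
  shows "I \<le> ennreal (\<epsilon> powr p)"
proof (cases I rule: ennreal_cases)
  case (real r)
  then have "r powr (1/p) \<le> \<epsilon>"
    using le \<epsilon> by (simp add: enn_root_def)
  then have "(r powr (1/p)) powr p \<le> \<epsilon> powr p"
    using p by (intro powr_mono2) auto
  then show ?thesis
    using p real by (simp add: powr_powr ennreal_leI)
next
  case top
  then show ?thesis using le by (simp add: enn_root_def top_unique)
qed

lemma convex_on_powr_nonneg:
  assumes p: "p \<ge> 1"
  shows "convex_on {0..} (\<lambda>x::real. x powr p)"
proof (rule convex_onI)
  fix t x y :: real
  assume t: "0 < t" "t < 1" and xy: "x \<in> {0..}" "y \<in> {0..}"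
  have scaled: "(s * z) powr p \<le> s * z powr p" if "0 < s" "s < 1" "z \<ge> 0" for s z :: real
    using that p by (simp add: powr_mult mult_right_mono powr_le_one_le)
  show "((1 - t) *\<^sub>R x + t *\<^sub>R y) powr p \<le> (1 - t) * x powr p + t * y powr p"
  proof (cases "x = 0 \<or> y = 0")
    case True
    then show ?thesis using scaled[of t y] scaled[of "1 - t" x] t xy p by auto
  next
    case False
    then show ?thesis using convex_onD[OF powr_convex[OF p], of t x y] t xy by simp
  qed
qed simp

lemma abs_add_powr_le_weighted:
  fixes p A B x y :: real
  assumes p: "p \<ge> 1" and A: "A > 0" and B: "B > 0"
  shows "\<bar>x + y\<bar> powr p \<le> (A + B) powr (p - 1) * (A powr (1 - p) * \<bar>x\<bar> powr p + B powr (1 - p) * \<bar>y\<bar> powr p)"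
proof -
  define t where "t = B / (A + B)"
  have t: "0 \<le> t" "t \<le> 1" "1 - t = A / (A + B)"
    using A B by (auto simp: t_def field_simps)
  have "\<bar>x + y\<bar> powr p \<le> (\<bar>x\<bar> + \<bar>y\<bar>) powr p"
    using p by (intro powr_mono2) auto
  also have "\<bar>x\<bar> + \<bar>y\<bar> = (A + B) * ((1 - t) * (\<bar>x\<bar> / A) + t * (\<bar>y\<bar> / B))"
  proof -
    have "(1 - t) * (\<bar>x\<bar> / A) = \<bar>x\<bar> / (A + B)" "t * (\<bar>y\<bar> / B) = \<bar>y\<bar> / (A + B)"
      using A B by (simp_all add: t_def field_simps add_pos_pos)
    then show ?thesis using A B by (simp add: add_divide_distrib[symmetric])
  qed
  also have "((A + B) * ((1 - t) * (\<bar>x\<bar> / A) + t * (\<bar>y\<bar> / B))) powr p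
      = (A + B) powr p * ((1 - t) * (\<bar>x\<bar> / A) + t * (\<bar>y\<bar> / B)) powr p"
    by (rule powr_mult)
  also have "\<dots> \<le> (A + B) powr p * ((1 - t) * (\<bar>x\<bar> / A) powr p + t * (\<bar>y\<bar> / B) powr p)"
    using convex_onD[OF convex_on_powr_nonneg[OF p], of t "\<bar>x\<bar> / A" "\<bar>y\<bar> / B"] A B t
    by (intro mult_left_mono) auto
  also have "\<dots> = ((A + B) powr p / (A + B)) * ((A / A powr p) * \<bar>x\<bar> powr p + (B / B powr p) * \<bar>y\<bar> powr p)"
    unfolding t(3) powr_divide by (simp add: t_def divide_inverse algebra_simps)
  also have "\<dots> = (A + B) powr (p - 1) * (A powr (1 - p) * \<bar>x\<bar> powr p + B powr (1 - p) * \<bar>y\<bar> powr p)"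
    using A B by (simp add: powr_diff)
  finally show ?thesis .
qed

lemma nn_integral_abs_add_powr_eq_of_null:
  fixes f g :: "'a \<Rightarrow> real"
  assumes [measurable]: "f \<in> borel_measurable M" and p: "p > 0"
    and null: "(\<integral>\<^sup>+x. ennreal (\<bar>f x\<bar> powr p) \<partial>M) = 0"
  shows "(\<integral>\<^sup>+x. ennreal (\<bar>f x + g x\<bar> powr p) \<partial>M) = (\<integral>\<^sup>+x. ennreal (\<bar>g x\<bar> powr p) \<partial>M)"
proof -
  have "AE x in M. ennreal (\<bar>f x\<bar> powr p) = 0"
    using null by (subst (asm) nn_integral_0_iff_AE) auto
  then have "AE x in M. f x = 0"
    by eventually_elim (use p in auto)
  then show ?thesis
    by (intro nn_integral_cong_AE) auto
qed

lemma Minkowski_nn_integral: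
  fixes f g :: "'a \<Rightarrow> real"
  assumes [measurable]: "f \<in> borel_measurable M" "g \<in> borel_measurable M" and p: "p \<ge> 1"
  shows "enn_root p (\<integral>\<^sup>+x. ennreal (\<bar>f x + g x\<bar> powr p) \<partial>M)
    \<le> enn_root p (\<integral>\<^sup>+x. ennreal (\<bar>f x\<bar> powr p) \<partial>M) + enn_root p (\<integral>\<^sup>+x. ennreal (\<bar>g x\<bar> powr p) \<partial>M)"
proof -
  define IF where "IF = (\<integral>\<^sup>+x. ennreal (\<bar>f x\<bar> powr p) \<partial>M)"
  define IG where "IG = (\<integral>\<^sup>+x. ennreal (\<bar>g x\<bar> powr p) \<partial>M)"
  consider "IF = \<infinity> \<or> IG = \<infinity>" | "IF = 0 \<or> IG = 0" | "IF \<noteq> \<infinity>" "IG \<noteq> \<infinity>" "IF \<noteq> 0" "IG \<noteq> 0"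
    by blast
  then show ?thesis
  proof cases
    case 1
    then show ?thesis by (auto simp: IF_def[symmetric] IG_def[symmetric] enn_root_def)
  next
    case 2
    then show ?thesis
      using p nn_integral_abs_add_powr_eq_of_null[of f M p g] nn_integral_abs_add_powr_eq_of_null[of g M p f]
      by (auto simp: IF_def[symmetric] IG_def[symmetric] add.commute enn_root_def)
  next
    case 3
    \<comment> \<open>Weighting the pointwise inequality by the two norms \<open>A\<close> and \<open>B\<close> makes its integral \<open>(A + B)^p\<close>.\<close>
    define A where "A = enn2real IF powr (1/p)"
    define B where "B = enn2real IG powr (1/p)"
    have IFA: "IF = ennreal (A powr p)" and IGB: "IG = ennreal (B powr p)"
      using 3 p by (simp_all add: A_def B_def powr_powr less_top[symmetric])
    have "A \<noteq> 0" "B \<noteq> 0"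
      using 3 IFA IGB p by auto
    then have A: "A > 0" and B: "B > 0"
      unfolding A_def B_def by (simp_all add: order_less_le)
    have "(\<integral>\<^sup>+x. ennreal (\<bar>f x + g x\<bar> powr p) \<partial>M)
        \<le> (\<integral>\<^sup>+x. ennreal ((A + B) powr (p - 1)) *
              (ennreal (A powr (1 - p)) * ennreal (\<bar>f x\<bar> powr p) + ennreal (B powr (1 - p)) * ennreal (\<bar>g x\<bar> powr p)) \<partial>M)"
      by (intro nn_integral_mono)
        (simp add: ennreal_mult[symmetric] ennreal_plus[symmetric] abs_add_powr_le_weighted[OF p A B] del: ennreal_plus)
    also have "\<dots> = ennreal ((A + B) powr (p - 1)) * (ennreal (A powr (1 - p)) * IF + ennreal (B powr (1 - p)) * IG)"
      unfolding IF_def IG_def by (simp add: nn_integral_cmult nn_integral_add)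
    also have "\<dots> = ennreal ((A + B) powr (p - 1) * (A powr (1 - p) * A powr p + B powr (1 - p) * B powr p))"
      unfolding IFA IGB by (simp add: ennreal_mult)
    also have "(A + B) powr (p - 1) * (A powr (1 - p) * A powr p + B powr (1 - p) * B powr p) = (A + B) powr p"
    proof -
      have "A powr (1 - p) * A powr p = A" "B powr (1 - p) * B powr p = B"
        using A B by (simp_all add: powr_add[symmetric])
      moreover have "(A + B) powr (p - 1) * (A + B) = (A + B) powr p"
        using A B powr_add[of "A + B" "p - 1" 1] by simp
      ultimately show ?thesis by simp
    qed
    finally have "(\<integral>\<^sup>+x. ennreal (\<bar>f x + g x\<bar> powr p) \<partial>M) \<le> ennreal ((A + B) powr p)" .
    then have "enn_root p (\<integral>\<^sup>+x. ennreal (\<bar>f x + g x\<bar> powr p) \<partial>M) \<le> ennreal (A + B)"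
      using enn_root_mono[of p] enn_root_powr[of p "A + B"] A B p by fastforce
    also have "ennreal (A + B) = enn_root p IF + enn_root p IG"
      using A B p by (simp add: IFA IGB enn_root_powr)
    finally show ?thesis by (simp add: IF_def IG_def)
  qed
qed

section \<open>Quantile functions\<close>

definition quantile :: "real measure \<Rightarrow> real \<Rightarrow> real" where
  "quantile N u = Inf {x. u \<le> cdf N x}"

abbreviation lborel_01 :: "real measure" where
  "lborel_01 \<equiv> restrict_space lborel {0<..<1}"

lemma prob_space_lborel_01: "prob_space lborel_01"
  by (auto simp: emeasure_restrict_space space_restrict_space intro!: prob_spaceI)

lemma quantile_le_iff:
  assumes "real_distribution N" "0 < u" "u < 1"
  shows "quantile N u \<le> x \<longleftrightarrow> u \<le> cdf N x"
proof -
  interpret cdf_distribution N using assms(1) by (simp add: cdf_distribution_def)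
  show ?thesis unfolding quantile_def by (rule pseudoinverse[OF assms(2,3), symmetric])
qed

lemma measurable_quantile [measurable]:
  assumes "real_distribution N"
  shows "quantile N \<in> borel_measurable lborel_01"
proof -
  interpret cdf_distribution N using assms(1) by (simp add: cdf_distribution_def)
  have "sets lborel_01 = sets (restrict_space borel {0<..<1::real})"
    by (simp add: sets_restrict_space)
  from measurable_cong_sets[OF this refl] measurable_CI show ?thesis
    unfolding quantile_def[abs_def] by simp
qed

lemma distr_quantile:
  assumes "real_distribution N"
  shows "distr lborel_01 borel (quantile N) = N"
proof -
  interpret cdf_distribution N using assms(1) by (simp add: cdf_distribution_def)
  show ?thesis unfolding quantile_def[abs_def] by (rule distr_I_eq_M)
qed

lemma cdf_distr:
  assumes "X \<in> borel_measurable M"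
  shows "cdf (distr M borel X) x = measure M {\<omega> \<in> space M. X \<omega> \<le> x}"
  using assms by (simp add: cdf_def measure_distr vimage_def Int_def conj_commute)

section \<open>Optimality of the quantile coupling\<close>

lemma nn_integral_pos_part_diff:
  fixes X Y :: "'a \<Rightarrow> real"
  assumes "sigma_finite_measure M" and [measurable]: "X \<in> borel_measurable M" "Y \<in> borel_measurable M"
  shows "(\<integral>\<^sup>+\<omega>. ennreal (max 0 (X \<omega> - Y \<omega> - a)) \<partial>M)
       = (\<integral>\<^sup>+s. emeasure M {\<omega> \<in> space M. Y \<omega> \<le> s \<and> s + a < X \<omega>} \<partial>lborel)"
proof -
  interpret pair_sigma_finite M lborel
    using assms(1) by (simp add: pair_sigma_finite_def lborel.sigma_finite_measure_axioms)
  have "(\<integral>\<^sup>+\<omega>. ennreal (max 0 (X \<omega> - Y \<omega> - a)) \<partial>M)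
      = (\<integral>\<^sup>+\<omega>. \<integral>\<^sup>+s. indicator {Y \<omega> ..< X \<omega> - a} s \<partial>lborel \<partial>M)"
    by (intro nn_integral_cong) (auto simp: max_def)
  also have "\<dots> = (\<integral>\<^sup>+s. \<integral>\<^sup>+\<omega>. indicator {Y \<omega> ..< X \<omega> - a} s \<partial>M \<partial>lborel)"
  proof -
    have "(\<lambda>(\<omega>, s). indicator {Y \<omega> ..< X \<omega> - a} s :: ennreal) \<in> borel_measurable (M \<Otimes>\<^sub>M lborel)"
      unfolding indicator_def atLeastLessThan_iff by measurable
    from Fubini'[OF this] show ?thesis by simp
  qed
  also have "\<dots> = (\<integral>\<^sup>+s. \<integral>\<^sup>+\<omega>. indicator {\<omega> \<in> space M. Y \<omega> \<le> s \<and> s + a < X \<omega>} \<omega> \<partial>M \<partial>lborel)"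
    by (intro nn_integral_cong) (auto simp: indicator_def)
  also have "\<dots> = (\<integral>\<^sup>+s. emeasure M {\<omega> \<in> space M. Y \<omega> \<le> s \<and> s + a < X \<omega>} \<partial>lborel)"
    by (intro nn_integral_cong nn_integral_indicator) measurable
  finally show ?thesis .
qed

lemma (in prob_space) cdf_diff_le_measure_joint:
  assumes [measurable]: "X \<in> borel_measurable M" "Y \<in> borel_measurable M"
  shows "cdf (distr M borel Y) s - cdf (distr M borel X) t \<le> measure M {\<omega> \<in> space M. Y \<omega> \<le> s \<and> t < X \<omega>}"
proof -
  have "measure M {\<omega> \<in> space M. Y \<omega> \<le> s}
      \<le> measure M ({\<omega> \<in> space M. Y \<omega> \<le> s \<and> t < X \<omega>} \<union> {\<omega> \<in> space M. X \<omega> \<le> t})"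
    by (intro finite_measure_mono) auto
  also have "\<dots> \<le> measure M {\<omega> \<in> space M. Y \<omega> \<le> s \<and> t < X \<omega>} + measure M {\<omega> \<in> space M. X \<omega> \<le> t}"
    by (intro measure_Un_le) auto
  finally show ?thesis by (simp add: cdf_distr)
qed

lemma emeasure_quantile_joint_le:
  assumes "real_distribution \<alpha>" "real_distribution \<beta>"
  shows "emeasure lborel_01 {u \<in> space lborel_01. quantile \<beta> u \<le> s \<and> t < quantile \<alpha> u}
    \<le> ennreal (cdf \<beta> s - cdf \<alpha> t)"
proof -
  have "{u \<in> space lborel_01. quantile \<beta> u \<le> s \<and> t < quantile \<alpha> u} \<subseteq> {cdf \<alpha> t <.. cdf \<beta> s}"
    using quantile_le_iff[OF assms(1), of _ t] quantile_le_iff[OF assms(2), of _ s]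
    by (auto simp: space_restrict_space simp flip: not_le)
  then have "emeasure lborel_01 {u \<in> space lborel_01. quantile \<beta> u \<le> s \<and> t < quantile \<alpha> u}
      \<le> emeasure lborel {cdf \<alpha> t <.. cdf \<beta> s}"
    by (subst emeasure_restrict_space) (auto simp: space_restrict_space intro!: emeasure_mono)
  also have "\<dots> = ennreal (cdf \<beta> s - cdf \<alpha> t)"
    by (cases "cdf \<alpha> t \<le> cdf \<beta> s") (auto simp: ennreal_neg)
  finally show ?thesis .
qed

lemma quantile_pos_part_le:
  fixes X Y :: "'a \<Rightarrow> real"
  assumes M: "prob_space M" and [measurable]: "X \<in> borel_measurable M" "Y \<in> borel_measurable M"
  defines "\<alpha> \<equiv> distr M borel X" and "\<beta> \<equiv> distr M borel Y"
  shows "(\<integral>\<^sup>+u. ennreal (max 0 (quantile \<alpha> u - quantile \<beta> u - a)) \<partial>lborel_01)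
       \<le> (\<integral>\<^sup>+\<omega>. ennreal (max 0 (X \<omega> - Y \<omega> - a)) \<partial>M)"
proof -
  interpret M: prob_space M by (rule M)
  interpret U: prob_space lborel_01 by (rule prob_space_lborel_01)
  have \<alpha>: "real_distribution \<alpha>" and \<beta>: "real_distribution \<beta>"
    by (simp_all add: \<alpha>_def \<beta>_def)
  note [measurable] = measurable_quantile[OF \<alpha>] measurable_quantile[OF \<beta>]
  have "(\<integral>\<^sup>+u. ennreal (max 0 (quantile \<alpha> u - quantile \<beta> u - a)) \<partial>lborel_01)
      = (\<integral>\<^sup>+s. emeasure lborel_01 {u \<in> space lborel_01. quantile \<beta> u \<le> s \<and> s + a < quantile \<alpha> u} \<partial>lborel)"
    by (rule nn_integral_pos_part_diff) (auto simp: U.sigma_finite_measure_axioms)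
  also have "\<dots> \<le> (\<integral>\<^sup>+s. ennreal (cdf \<beta> s - cdf \<alpha> (s + a)) \<partial>lborel)"
    by (intro nn_integral_mono emeasure_quantile_joint_le \<alpha> \<beta>)
  also have "\<dots> \<le> (\<integral>\<^sup>+s. emeasure M {\<omega> \<in> space M. Y \<omega> \<le> s \<and> s + a < X \<omega>} \<partial>lborel)"
    unfolding \<alpha>_def \<beta>_def
    by (intro nn_integral_mono) (simp add: M.emeasure_eq_measure ennreal_leI M.cdf_diff_le_measure_joint)
  also have "\<dots> = (\<integral>\<^sup>+\<omega>. ennreal (max 0 (X \<omega> - Y \<omega> - a)) \<partial>M)"
    by (rule nn_integral_pos_part_diff[symmetric]) (auto simp: M.sigma_finite_measure_axioms)
  finally show ?thesis .
qed

definition powr_weight :: "real \<Rightarrow> real \<Rightarrow> real" where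
  "powr_weight p a = (if 0 < a then p * (p - 1) * a powr (p - 2) else 0)"

lemma powr_weight_nonneg: "p \<ge> 1 \<Longrightarrow> powr_weight p a \<ge> 0"
  by (simp add: powr_weight_def)

lemma borel_measurable_powr_weight [measurable]: "powr_weight p \<in> borel_measurable borel"
  unfolding powr_weight_def[abs_def] by measurable

lemma powr_eq_nn_integral_powr_weight:
  assumes p: "p > 1" and r: "r \<ge> 0"
  shows "ennreal (r powr p) = (\<integral>\<^sup>+a. ennreal (powr_weight p a * max 0 (r - a)) \<partial>lborel)"
proof -
  define F where "F a = p * r * a powr (p - 1) - (p - 1) * a powr p" for a
  define f where "f a = p * (p - 1) * a powr (p - 2) * (r - a)" for a
  have "continuous_on {0..r} F"
    unfolding F_def using p by (intro continuous_intros continuous_on_powr') auto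
  moreover have "(F has_vector_derivative f a) (at a)" if "a \<in> {0<..<r}" for a
  proof -
    have a: "a > 0" using that by auto
    have "(F has_real_derivative p * r * ((p - 1) * a powr (p - 1 - 1)) - (p - 1) * (p * a powr (p - 1))) (at a)"
      unfolding F_def by (intro DERIV_diff DERIV_cmult has_real_derivative_powr a)
    moreover have "a powr (p - 1) = a powr (p - 2) * a"
      using a powr_add[of a "p - 2" 1] by simp
    ultimately show ?thesis
      by (simp add: has_real_derivative_iff_has_vector_derivative f_def algebra_simps)
  qed
  ultimately have "(f has_integral F r - F 0) {0..r}"
    by (rule fundamental_theorem_of_calculus_interior[OF r])
  moreover have "F r - F 0 = r powr p"
    using p r powr_add[of r 1 "p - 1"] by (cases "r = 0") (auto simp: F_def algebra_simps)
  ultimately have "(f has_integral r powr p) {0..r}"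
    by simp
  then have "((\<lambda>a. if a \<in> {0..r} then f a else 0) has_integral r powr p) UNIV"
    by (simp only: has_integral_restrict_UNIV)
  moreover have "powr_weight p a * max 0 (r - a) = (if a \<in> {0..r} then f a else 0)" for a
    by (auto simp: powr_weight_def f_def max_def)
  ultimately have "((\<lambda>a. powr_weight p a * max 0 (r - a)) has_integral r powr p) UNIV"
    by simp
  then show ?thesis
    using p by (intro nn_integral_has_integral_lborel[symmetric]) (auto simp: powr_weight_nonneg)
qed

lemma abs_diff_powr_eq_nn_integral_pos_parts:
  fixes p x y :: real
  assumes p: "p > 1"
  shows "ennreal (\<bar>x - y\<bar> powr p)
    = (\<integral>\<^sup>+a. ennreal (powr_weight p a) * (ennreal (max 0 (x - y - a)) + ennreal (max 0 (y - x - a))) \<partial>lborel)"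
proof -
  have "ennreal (powr_weight p a) * (ennreal (max 0 (x - y - a)) + ennreal (max 0 (y - x - a)))
      = ennreal (powr_weight p a * max 0 (\<bar>x - y\<bar> - a))" for a
  proof (cases "a > 0")
    case True
    then have "ennreal (max 0 (x - y - a)) + ennreal (max 0 (y - x - a)) = ennreal (max 0 (\<bar>x - y\<bar> - a))"
      by (auto simp: max_def abs_if simp flip: ennreal_plus)
    then show ?thesis
      using p by (simp add: ennreal_mult powr_weight_nonneg)
  qed (simp add: powr_weight_def)
  then show ?thesis
    using powr_eq_nn_integral_powr_weight[OF p, of "\<bar>x - y\<bar>"] by simp
qed

lemma quantile_cost_le:
  fixes X Y :: "'a \<Rightarrow> real"
  assumes M: "prob_space M" and [measurable]: "X \<in> borel_measurable M" "Y \<in> borel_measurable M"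
    and p: "p \<ge> 1"
  defines "\<alpha> \<equiv> distr M borel X" and "\<beta> \<equiv> distr M borel Y"
  shows "(\<integral>\<^sup>+u. ennreal (\<bar>quantile \<alpha> u - quantile \<beta> u\<bar> powr p) \<partial>lborel_01)
       \<le> (\<integral>\<^sup>+\<omega>. ennreal (\<bar>X \<omega> - Y \<omega>\<bar> powr p) \<partial>M)"
proof -
  interpret M: prob_space M by (rule M)
  interpret U: prob_space lborel_01 by (rule prob_space_lborel_01)
  have \<alpha>: "real_distribution \<alpha>" and \<beta>: "real_distribution \<beta>"
    by (simp_all add: \<alpha>_def \<beta>_def)
  note [measurable] = measurable_quantile[OF \<alpha>] measurable_quantile[OF \<beta>]
  let ?hinge_q = "\<lambda>a u. ennreal (max 0 (quantile \<alpha> u - quantile \<beta> u - a)) + ennreal (max 0 (quantile \<beta> u - quantile \<alpha> u - a))"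
  let ?hinge_xy = "\<lambda>a \<omega>. ennreal (max 0 (X \<omega> - Y \<omega> - a)) + ennreal (max 0 (Y \<omega> - X \<omega> - a))"
  have pos_parts: "(\<integral>\<^sup>+u. ?hinge_q a u \<partial>lborel_01) \<le> (\<integral>\<^sup>+\<omega>. ?hinge_xy a \<omega> \<partial>M)" for a
    using add_mono[OF quantile_pos_part_le[OF M, of X Y a] quantile_pos_part_le[OF M, of Y X a]]
    by (simp add: nn_integral_add \<alpha>_def \<beta>_def)
  show ?thesis
  proof (cases "p = 1")
    case True
    have "ennreal (\<bar>x - y\<bar> powr p) = ennreal (max 0 (x - y - 0)) + ennreal (max 0 (y - x - 0))" for x y :: real
      using True by (auto simp: max_def abs_if simp flip: ennreal_plus)
    then show ?thesis using pos_parts[of 0] by simp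
  next
    case False
    then have p: "p > 1" using p by simp
    interpret U_lborel: pair_sigma_finite lborel_01 lborel
      by (simp add: pair_sigma_finite_def lborel.sigma_finite_measure_axioms U.sigma_finite_measure_axioms)
    interpret M_lborel: pair_sigma_finite M lborel
      by (simp add: pair_sigma_finite_def lborel.sigma_finite_measure_axioms M.sigma_finite_measure_axioms)
    have "(\<integral>\<^sup>+u. ennreal (\<bar>quantile \<alpha> u - quantile \<beta> u\<bar> powr p) \<partial>lborel_01)
        = (\<integral>\<^sup>+u. \<integral>\<^sup>+a. ennreal (powr_weight p a) * ?hinge_q a u \<partial>lborel \<partial>lborel_01)"
      by (intro nn_integral_cong abs_diff_powr_eq_nn_integral_pos_parts p)
    also have "\<dots> = (\<integral>\<^sup>+a. \<integral>\<^sup>+u. ennreal (powr_weight p a) * ?hinge_q a u \<partial>lborel_01 \<partial>lborel)"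
      by (rule U_lborel.Fubini'[symmetric]) measurable
    also have "\<dots> = (\<integral>\<^sup>+a. ennreal (powr_weight p a) * (\<integral>\<^sup>+u. ?hinge_q a u \<partial>lborel_01) \<partial>lborel)"
      by (intro nn_integral_cong nn_integral_cmult) measurable
    also have "\<dots> \<le> (\<integral>\<^sup>+a. ennreal (powr_weight p a) * (\<integral>\<^sup>+\<omega>. ?hinge_xy a \<omega> \<partial>M) \<partial>lborel)"
      by (intro nn_integral_mono mult_left_mono pos_parts) auto
    also have "\<dots> = (\<integral>\<^sup>+a. \<integral>\<^sup>+\<omega>. ennreal (powr_weight p a) * ?hinge_xy a \<omega> \<partial>M \<partial>lborel)"
      by (intro nn_integral_cong nn_integral_cmult[symmetric]) measurable
    also have "\<dots> = (\<integral>\<^sup>+\<omega>. \<integral>\<^sup>+a. ennreal (powr_weight p a) * ?hinge_xy a \<omega> \<partial>lborel \<partial>M)"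
      by (rule M_lborel.Fubini') measurable
    also have "\<dots> = (\<integral>\<^sup>+\<omega>. ennreal (\<bar>X \<omega> - Y \<omega>\<bar> powr p) \<partial>M)"
      by (intro nn_integral_cong abs_diff_powr_eq_nn_integral_pos_parts[symmetric] p)
    finally show ?thesis .
  qed
qed

section \<open>Wasserstein distance on the real line\<close>

lemma borel_measurable_fst_snd_real [measurable]:
  "(fst :: real \<times> real \<Rightarrow> real) \<in> borel_measurable borel"
  "(snd :: real \<times> real \<Rightarrow> real) \<in> borel_measurable borel"
  by (intro borel_measurable_continuous_onI continuous_intros)+

lemma wasserstein_distr_le:
  assumes M: "prob_space M" and [measurable]: "X \<in> borel_measurable M" "Y \<in> borel_measurable M"
  shows "wasserstein p (distr M borel X) (distr M borel Y)
    \<le> enn_root p (\<integral>\<^sup>+\<omega>. ennreal (\<bar>X \<omega> - Y \<omega>\<bar> powr p) \<partial>M)"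
proof -
  let ?\<pi> = "distr M borel (\<lambda>\<omega>. (X \<omega>, Y \<omega>))"
  have "?\<pi> \<in> couplings (distr M borel X) (distr M borel Y)"
    unfolding couplings_def
    by (auto simp: distr_distr comp_def intro!: prob_space.prob_space_distr[OF M])
  then have "wasserstein p (distr M borel X) (distr M borel Y)
      \<le> enn_root p (\<integral>\<^sup>+z. ennreal (\<bar>fst z - snd z\<bar> powr p) \<partial>?\<pi>)"
    unfolding wasserstein_def by (rule INF_lower)
  also have "(\<integral>\<^sup>+z. ennreal (\<bar>fst z - snd z\<bar> powr p) \<partial>?\<pi>) = (\<integral>\<^sup>+\<omega>. ennreal (\<bar>X \<omega> - Y \<omega>\<bar> powr p) \<partial>M)"
    by (subst nn_integral_distr) auto
  finally show ?thesis .
qed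

lemma wasserstein_eq_quantile:
  assumes \<alpha>: "real_distribution \<alpha>" and \<beta>: "real_distribution \<beta>" and p: "p \<ge> 1"
  shows "wasserstein p \<alpha> \<beta>
    = enn_root p (\<integral>\<^sup>+u. ennreal (\<bar>quantile \<alpha> u - quantile \<beta> u\<bar> powr p) \<partial>lborel_01)"
proof (rule antisym)
  show "wasserstein p \<alpha> \<beta> \<le> enn_root p (\<integral>\<^sup>+u. ennreal (\<bar>quantile \<alpha> u - quantile \<beta> u\<bar> powr p) \<partial>lborel_01)"
    using wasserstein_distr_le[OF prob_space_lborel_01 measurable_quantile[OF \<alpha>] measurable_quantile[OF \<beta>]]
    by (simp add: distr_quantile \<alpha> \<beta>)
  show "enn_root p (\<integral>\<^sup>+u. ennreal (\<bar>quantile \<alpha> u - quantile \<beta> u\<bar> powr p) \<partial>lborel_01) \<le> wasserstein p \<alpha> \<beta>"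
    unfolding wasserstein_def
  proof (rule INF_greatest)
    fix \<pi> assume "\<pi> \<in> couplings \<alpha> \<beta>"
    then have \<pi>: "prob_space \<pi>" "sets \<pi> = sets (borel :: (real \<times> real) measure)"
      and marginals: "distr \<pi> borel fst = \<alpha>" "distr \<pi> borel snd = \<beta>"
      by (auto simp: couplings_def)
    have [measurable]: "fst \<in> borel_measurable \<pi>" "snd \<in> borel_measurable \<pi>"
      by (simp_all add: measurable_cong_sets[OF \<pi>(2) refl])
    show "enn_root p (\<integral>\<^sup>+u. ennreal (\<bar>quantile \<alpha> u - quantile \<beta> u\<bar> powr p) \<partial>lborel_01)
        \<le> enn_root p (\<integral>\<^sup>+z. ennreal (\<bar>fst z - snd z\<bar> powr p) \<partial>\<pi>)"
      using quantile_cost_le[OF \<pi>(1), of fst snd p] p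
      by (intro enn_root_mono) (auto simp: marginals)
  qed
qed

lemma wasserstein_commute:
  assumes "real_distribution \<alpha>" and "real_distribution \<beta>" and "p \<ge> 1"
  shows "wasserstein p \<alpha> \<beta> = wasserstein p \<beta> \<alpha>"
  using assms by (simp add: wasserstein_eq_quantile abs_minus_commute)

lemma wasserstein_triangle:
  assumes \<alpha>: "real_distribution \<alpha>" and \<beta>: "real_distribution \<beta>" and \<gamma>: "real_distribution \<gamma>"
    and p: "p \<ge> 1"
  shows "wasserstein p \<alpha> \<gamma> \<le> wasserstein p \<alpha> \<beta> + wasserstein p \<beta> \<gamma>"
proof -
  note [measurable] = measurable_quantile[OF \<alpha>] measurable_quantile[OF \<beta>] measurable_quantile[OF \<gamma>]
  have "\<bar>quantile \<alpha> u - quantile \<gamma> u\<bar>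
      = \<bar>(quantile \<alpha> u - quantile \<beta> u) + (quantile \<beta> u - quantile \<gamma> u)\<bar>" for u
    by simp
  then show ?thesis
    using Minkowski_nn_integral[of "\<lambda>u. quantile \<alpha> u - quantile \<beta> u" lborel_01 "\<lambda>u. quantile \<beta> u - quantile \<gamma> u" p] p
    by (simp add: wasserstein_eq_quantile assms)
qed

section \<open>Statistical parity from a Wasserstein bound\<close>

lemma cdf_gap_le_quantile_cost:
  assumes \<alpha>: "real_distribution \<alpha>" and \<beta>: "real_distribution \<beta>" and t: "t > 0" and p: "p > 0"
  shows "ennreal (t powr p * (cdf \<alpha> z - cdf \<beta> (z + t)))
    \<le> (\<integral>\<^sup>+u. ennreal (\<bar>quantile \<alpha> u - quantile \<beta> u\<bar> powr p) \<partial>lborel_01)"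
proof (cases "cdf \<beta> (z + t) < cdf \<alpha> z")
  case True
  interpret \<alpha>: real_distribution \<alpha> by (rule \<alpha>)
  interpret \<beta>: real_distribution \<beta> by (rule \<beta>)
  note [measurable] = measurable_quantile[OF \<alpha>] measurable_quantile[OF \<beta>]
  define S where "S = {cdf \<beta> (z + t) <..< cdf \<alpha> z}"
  have S: "S \<subseteq> {0<..<1}"
    using \<alpha>.cdf_bounded_prob[of z] \<beta>.cdf_nonneg[of "z + t"] by (auto simp: S_def)
  have "t powr p \<le> \<bar>quantile \<alpha> u - quantile \<beta> u\<bar> powr p" if "u \<in> S" for u
  proof -
    have u: "0 < u" "u < 1" using S that by auto
    have "quantile \<alpha> u \<le> z" "\<not> quantile \<beta> u \<le> z + t"
      using that by (auto simp: S_def quantile_le_iff[OF \<alpha> u] quantile_le_iff[OF \<beta> u])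
    then show ?thesis
      using t p by (intro powr_mono2) auto
  qed
  then have "(\<integral>\<^sup>+u. ennreal (t powr p) * indicator S u \<partial>lborel_01)
      \<le> (\<integral>\<^sup>+u. ennreal (\<bar>quantile \<alpha> u - quantile \<beta> u\<bar> powr p) \<partial>lborel_01)"
    by (intro nn_integral_mono) (auto simp: indicator_def intro!: ennreal_leI)
  moreover have "(\<integral>\<^sup>+u. ennreal (t powr p) * indicator S u \<partial>lborel_01) = ennreal (t powr p) * emeasure lborel S"
    using S by (simp add: nn_integral_cmult_indicator sets_restrict_space_iff emeasure_restrict_space S_def)
  moreover have "emeasure lborel S = ennreal (cdf \<alpha> z - cdf \<beta> (z + t))"
    using True by (simp add: S_def)
  ultimately show ?thesis
    using True by (simp add: ennreal_mult)
next
  case False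
  then have "t powr p * (cdf \<alpha> z - cdf \<beta> (z + t)) \<le> 0"
    by (intro mult_nonneg_nonpos) auto
  then show ?thesis
    by (simp add: ennreal_neg)
qed

lemma density_bound_pos:
  assumes "real_distribution \<beta>" "\<beta> = density lborel g" "g \<in> borel_measurable borel" "\<And>x. g x \<le> ennreal C"
  shows "C > 0"
proof (rule ccontr)
  assume "\<not> C > 0"
  then have "g x = 0" for x
    using assms(4)[of x] by (simp add: ennreal_neg)
  then have "emeasure \<beta> (space \<beta>) = 0"
    using assms(2,3) by (simp add: emeasure_density)
  then show False
    using prob_space.emeasure_space_1[of \<beta>] assms(1) by (simp add: real_distribution_def)
qed

lemma cdf_add_le_of_density_bounded:
  assumes \<beta>: "real_distribution \<beta>" and g: "\<beta> = density lborel g" "g \<in> borel_measurable borel"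
    and bound: "\<And>x. g x \<le> ennreal C" and C: "C \<ge> 0" and t: "t \<ge> 0"
  shows "cdf \<beta> (z + t) \<le> cdf \<beta> z + C * t"
proof -
  interpret real_distribution \<beta> by (rule \<beta>)
  have "emeasure \<beta> {z<..z + t} = (\<integral>\<^sup>+x. g x * indicator {z<..z + t} x \<partial>lborel)"
    using g by (simp add: emeasure_density)
  also have "\<dots> \<le> (\<integral>\<^sup>+x. ennreal C * indicator {z<..z + t} x \<partial>lborel)"
    by (intro nn_integral_mono mult_right_mono bound) auto
  also have "\<dots> = ennreal (C * t)"
    using t C by (simp add: nn_integral_cmult ennreal_mult)
  finally have "measure \<beta> {z<..z + t} \<le> C * t"
    using C t by (simp add: emeasure_eq_measure)
  then show ?thesis
    using cdf_diff_eq[of z "z + t"] t by (cases "t = 0") auto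
qed

lemma cdf_diff_le_of_wasserstein_le:
  assumes \<alpha>: "real_distribution \<alpha>" and \<beta>: "real_distribution \<beta>"
    and g: "\<beta> = density lborel g" "g \<in> borel_measurable borel" and bound: "\<And>x. g x \<le> ennreal C"
    and p: "p \<ge> 1" and \<epsilon>: "\<epsilon> \<ge> 0" and W: "wasserstein p \<alpha> \<beta> \<le> ennreal \<epsilon>"
  shows "cdf \<alpha> z - cdf \<beta> z \<le> 2 * sqrt (C * \<epsilon>)"
proof -
  have C: "C > 0"
    using density_bound_pos[OF \<beta> g bound] .
  define \<delta> where "\<delta> = cdf \<alpha> z - cdf \<beta> z"
  show ?thesis
  proof (cases "\<delta> > 0")
    case False
    moreover have "0 \<le> sqrt (C * \<epsilon>)"
      using C \<epsilon> by simp
    ultimately show ?thesis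
      unfolding \<delta>_def by linarith
  next
    case True
    interpret \<alpha>: real_distribution \<alpha> by (rule \<alpha>)
    interpret \<beta>: real_distribution \<beta> by (rule \<beta>)
    have "\<delta> \<le> 1"
      using \<alpha>.cdf_bounded_prob[of z] \<beta>.cdf_nonneg[of z] by (simp add: \<delta>_def)
    \<comment> \<open>With this shift the density bound eats only half of the CDF gap \<open>\<delta>\<close>.\<close>
    define t where "t = \<delta> / (2 * C)"
    have t: "t > 0" "C * t = \<delta> / 2"
      using True C by (simp_all add: t_def)
    have "cdf \<beta> (z + t) \<le> cdf \<beta> z + \<delta> / 2"
      using cdf_add_le_of_density_bounded[OF \<beta> g bound less_imp_le[OF C] less_imp_le[OF t(1)], of z] t(2)
      by simp
    then have gap: "\<delta> / 2 \<le> cdf \<alpha> z - cdf \<beta> (z + t)"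
      by (simp add: \<delta>_def field_simps)
    have "(t * (\<delta> / 2)) powr p = t powr p * (\<delta> / 2) powr p"
      by (rule powr_mult)
    also have "\<dots> \<le> t powr p * (\<delta> / 2)"
      using p True \<open>\<delta> \<le> 1\<close> by (intro mult_left_mono powr_le_one_le) auto
    also have "\<dots> \<le> t powr p * (cdf \<alpha> z - cdf \<beta> (z + t))"
      using gap by (intro mult_left_mono) auto
    also have "\<dots> \<le> \<epsilon> powr p"
    proof -
      have "ennreal (t powr p * (cdf \<alpha> z - cdf \<beta> (z + t)))
          \<le> (\<integral>\<^sup>+u. ennreal (\<bar>quantile \<alpha> u - quantile \<beta> u\<bar> powr p) \<partial>lborel_01)"
        using cdf_gap_le_quantile_cost[OF \<alpha> \<beta> t(1)] p by simp
      also have "\<dots> \<le> ennreal (\<epsilon> powr p)"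
        using W p \<epsilon> by (intro enn_root_le_imp_le_powr) (simp_all add: wasserstein_eq_quantile[OF \<alpha> \<beta> p, symmetric])
      finally show ?thesis
        using \<epsilon> by simp
    qed
    finally have "t * (\<delta> / 2) \<le> \<epsilon>"
      using p \<epsilon> by (meson not_le powr_less_mono2 zero_less_one order_less_le_trans)
    then have "\<delta>\<^sup>2 \<le> 4 * (C * \<epsilon>)"
      using C by (simp add: t_def field_simps power2_eq_square)
    then have "\<delta> \<le> sqrt (4 * (C * \<epsilon>))"
      by (rule real_le_rsqrt)
    then show ?thesis
      by (simp add: \<delta>_def real_sqrt_mult)
  qed
qed

section \<open>Fair prediction\<close>

lemma measurable_outcome:
  assumes "sets \<nu> = sets (sample_space :: 'd::finite outcome measure)"
  shows "fst \<in> measurable \<nu> (borel :: (real^'d) measure)"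
    and "(\<lambda>\<omega>. fst (snd \<omega>)) \<in> measurable \<nu> (count_space UNIV)"
    and "(\<lambda>\<omega>. snd (snd \<omega>)) \<in> borel_measurable \<nu>"
  by (subst measurable_cong_sets[OF assms[unfolded sample_space_def] refl], measurable)+

lemma sets_cond_dist [simp]: "sets (cond_dist \<mu> a) = sets \<mu>"
  and space_cond_dist [simp]: "space (cond_dist \<mu> a) = space \<mu>"
  by (simp_all add: cond_dist_def)

lemma
  assumes \<mu>: "prob_space \<mu>" "sets \<mu> = sets sample_space"
    and pos: "measure \<mu> {\<omega> \<in> space \<mu>. fst (snd \<omega>) = a} > 0"
  shows prob_space_cond_dist: "prob_space (cond_dist \<mu> a)"
    and AE_cond_dist: "(AE \<omega> in \<mu>. P \<omega>) \<Longrightarrow> (AE \<omega> in cond_dist \<mu> a. P \<omega>)"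
proof -
  interpret prob_space \<mu> by (rule \<mu>(1))
  have event: "{\<omega> \<in> space \<mu>. fst (snd \<omega>) = a} \<in> sets \<mu>"
    using measurable_outcome(2)[OF \<mu>(2)] by measurable
  moreover have "emeasure \<mu> {\<omega> \<in> space \<mu>. fst (snd \<omega>) = a} \<noteq> 0"
    using pos by (simp add: emeasure_eq_measure)
  ultimately show "prob_space (cond_dist \<mu> a)"
    unfolding cond_dist_def by (intro prob_space_uniform_measure) auto
  show "AE \<omega> in cond_dist \<mu> a. P \<omega>" if "AE \<omega> in \<mu>. P \<omega>"
    using that event \<open>emeasure \<mu> _ \<noteq> 0\<close> unfolding cond_dist_def
    by (subst AE_uniform_measure) (auto simp: emeasure_eq_measure)
qed

lemma opt_lp_error_le_1:
  assumes \<nu>: "prob_space \<nu>"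
    and Y: "AE \<omega> in \<nu>. \<bar>snd (snd \<omega>)\<bar> \<le> 1" and p: "p > 0"
  shows "opt_lp_error p \<nu> \<le> 1"
proof -
  have "opt_lp_error p \<nu> \<le> lp_error p \<nu> (\<lambda>_. 0)"
    unfolding opt_lp_error_def by (rule INF_lower) simp
  also have "\<dots> \<le> enn_root p 1"
    unfolding lp_error_def
  proof (intro enn_root_mono p)
    have "(\<integral>\<^sup>+\<omega>. ennreal (\<bar>0 - snd (snd \<omega>)\<bar> powr p) \<partial>\<nu>) \<le> (\<integral>\<^sup>+\<omega>. 1 \<partial>\<nu>)"
      using Y by (intro nn_integral_mono_AE, elim eventually_mono) (use p in \<open>simp add: powr_le1\<close>)
    also have "\<dots> = 1"
      using prob_space.emeasure_space_1[OF \<nu>] by simp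
    finally show "(\<integral>\<^sup>+\<omega>. ennreal (\<bar>0 - snd (snd \<omega>)\<bar> powr p) \<partial>\<nu>) \<le> 1" .
  qed
  also have "enn_root p 1 = 1"
    by (simp add: enn_root_def)
  finally show ?thesis .
qed

lemma real_distribution_push:
  assumes "prob_space \<nu>" "sets \<nu> = sets sample_space" "g \<in> borel_measurable borel"
  shows "real_distribution (push \<nu> g)"
  unfolding push_def using assms measurable_compose[OF measurable_outcome(1)[OF assms(2)] assms(3)]
  by (intro prob_space.real_distribution_distr)

lemma cdf_push:
  assumes "sets \<nu> = sets sample_space" "g \<in> borel_measurable borel"
  shows "cdf (push \<nu> g) z = measure \<nu> {\<omega> \<in> space \<nu>. g (fst \<omega>) \<le> z}"
  unfolding push_def using measurable_compose[OF measurable_outcome(1)[OF assms(1)] assms(2)]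
  by (rule cdf_distr)

lemma wasserstein_push_le_lp_error:
  assumes \<nu>: "prob_space \<nu>" "sets \<nu> = sets sample_space"
    and [measurable]: "u \<in> borel_measurable borel" "v \<in> borel_measurable borel" and p: "p \<ge> 1"
  shows "wasserstein p (push \<nu> u) (push \<nu> v) \<le> lp_error p \<nu> u + lp_error p \<nu> v"
proof -
  note [measurable] = measurable_outcome[OF \<nu>(2)]
  have "wasserstein p (push \<nu> u) (push \<nu> v)
      \<le> enn_root p (\<integral>\<^sup>+\<omega>. ennreal (\<bar>(u (fst \<omega>) - snd (snd \<omega>)) + (snd (snd \<omega>) - v (fst \<omega>))\<bar> powr p) \<partial>\<nu>)"
    unfolding push_def using wasserstein_distr_le[OF \<nu>(1), of "\<lambda>\<omega>. u (fst \<omega>)" "\<lambda>\<omega>. v (fst \<omega>)" p] by simp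
  also have "\<dots> \<le> lp_error p \<nu> u + lp_error p \<nu> v"
    using Minkowski_nn_integral[of "\<lambda>\<omega>. u (fst \<omega>) - snd (snd \<omega>)" \<nu> "\<lambda>\<omega>. snd (snd \<omega>) - v (fst \<omega>)" p] p
    by (simp add: lp_error_def abs_minus_commute)
  finally show ?thesis .
qed

lemma statistical_parity_of_wasserstein_le:
  assumes \<nu>0: "prob_space \<nu>0" "sets \<nu>0 = sets sample_space"
    and \<nu>1: "prob_space \<nu>1" "sets \<nu>1 = sets sample_space"
    and h: "h \<in> borel_measurable borel" and p: "p \<ge> 1" and \<epsilon>: "\<epsilon> \<ge> 0"
    and W: "wasserstein p (push \<nu>0 h) (push \<nu>1 h) \<le> ennreal \<epsilon>"
    and dens0: "\<exists>g. g \<in> borel_measurable borel \<and> push \<nu>0 h = density lborel g \<and> (\<forall>x. g x \<le> ennreal C)"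
    and dens1: "\<exists>g. g \<in> borel_measurable borel \<and> push \<nu>1 h = density lborel g \<and> (\<forall>x. g x \<le> ennreal C)"
  shows "\<bar>measure \<nu>0 {\<omega> \<in> space \<nu>0. h (fst \<omega>) \<le> z} - measure \<nu>1 {\<omega> \<in> space \<nu>1. h (fst \<omega>) \<le> z}\<bar>
    \<le> 2 * sqrt (C * \<epsilon>)"
proof -
  obtain g0 where g0: "g0 \<in> borel_measurable borel" "push \<nu>0 h = density lborel g0" "\<And>x. g0 x \<le> ennreal C"
    using dens0 by blast
  obtain g1 where g1: "g1 \<in> borel_measurable borel" "push \<nu>1 h = density lborel g1" "\<And>x. g1 x \<le> ennreal C"
    using dens1 by blast
  have H0: "real_distribution (push \<nu>0 h)" and H1: "real_distribution (push \<nu>1 h)"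
    using real_distribution_push \<nu>0 \<nu>1 h by blast+
  have "cdf (push \<nu>0 h) z - cdf (push \<nu>1 h) z \<le> 2 * sqrt (C * \<epsilon>)"
    using H0 H1 g1(2,1,3) p \<epsilon> W by (rule cdf_diff_le_of_wasserstein_le)
  moreover have "cdf (push \<nu>1 h) z - cdf (push \<nu>0 h) z \<le> 2 * sqrt (C * \<epsilon>)"
    using H1 H0 g0(2,1,3) p \<epsilon> W[unfolded wasserstein_commute[OF H0 H1 p]]
    by (rule cdf_diff_le_of_wasserstein_le)
  ultimately show ?thesis
    using \<nu>0(2) \<nu>1(2) h by (simp add: cdf_push abs_le_iff)
qed

lemma enn2ereal_excess_sum_ge:
  fixes W e0 e1 o0 o1 :: ennreal
  assumes W: "W \<le> (o0 + e0) + ennreal \<epsilon> + (e1 + o1)" and o: "o0 \<noteq> \<infinity>" "o1 \<noteq> \<infinity>" and \<epsilon>: "\<epsilon> \<ge> 0"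
  shows "(enn2ereal e0 - enn2ereal o0) + (enn2ereal e1 - enn2ereal o1)
     \<ge> enn2ereal W - 2 * (enn2ereal o0 + enn2ereal o1) - ereal \<epsilon>"
proof -
  have "enn2ereal W \<le> enn2ereal o0 + enn2ereal e0 + ereal \<epsilon> + (enn2ereal e1 + enn2ereal o1)"
    using W \<epsilon> by (simp add: less_eq_ennreal.rep_eq plus_ennreal.rep_eq)
  moreover have "\<bar>enn2ereal o0\<bar> \<noteq> \<infinity>" "\<bar>enn2ereal o1\<bar> \<noteq> \<infinity>"
    using o by simp_all
  moreover have "enn2ereal e0 \<ge> 0" "enn2ereal e1 \<ge> 0"
    by simp_all
  ultimately show ?thesis
    by (cases "enn2ereal e0"; cases "enn2ereal e1"; cases "enn2ereal W"; cases "enn2ereal o0"; cases "enn2ereal o1") auto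
qed

theorem proposition2:
  fixes \<mu> :: "'d::finite outcome measure"
    and p \<epsilon> :: real
    and f0 f1 h :: "real^'d \<Rightarrow> real"
  assumes "prob_space \<mu>"
    and "sets \<mu> = sets sample_space"
    and "measure \<mu> {\<omega> \<in> space \<mu>. fst (snd \<omega>) = False} > 0"
    and "measure \<mu> {\<omega> \<in> space \<mu>. fst (snd \<omega>) = True} > 0"
    and "AE \<omega> in \<mu>. \<bar>snd (snd \<omega>)\<bar> \<le> 1"
    and "p \<ge> 1"
    and "f0 \<in> borel_measurable borel"
    and "lp_error p (cond_dist \<mu> False) f0 = opt_lp_error p (cond_dist \<mu> False)"
    and "f1 \<in> borel_measurable borel"
    and "lp_error p (cond_dist \<mu> True) f1 = opt_lp_error p (cond_dist \<mu> True)"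
    and "h \<in> borel_measurable borel"
    and "\<epsilon> > 0"
    and "wasserstein p (push (cond_dist \<mu> False) h) (push (cond_dist \<mu> True) h) \<le> ennreal \<epsilon>"
  shows "(excess_risk p (cond_dist \<mu> False) h + excess_risk p (cond_dist \<mu> True) h
           \<ge> enn2ereal (wasserstein p (push (cond_dist \<mu> False) f0) (push (cond_dist \<mu> True) f1))
             - 2 * (enn2ereal (opt_lp_error p (cond_dist \<mu> False))
                    + enn2ereal (opt_lp_error p (cond_dist \<mu> True)))
             - ereal \<epsilon>)
    \<and> (\<forall>C::real. (\<forall>a. \<exists>g. g \<in> borel_measurable borel
                       \<and> push (cond_dist \<mu> a) h = density lborel g
                       \<and> (\<forall>z. g z \<le> ennreal C))
         \<longrightarrow> (\<forall>z. \<bar>measure (cond_dist \<mu> False) {\<omega> \<in> space \<mu>. h (fst \<omega>) \<le> z}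
                  - measure (cond_dist \<mu> True) {\<omega> \<in> space \<mu>. h (fst \<omega>) \<le> z}\<bar>
                 \<le> 2 * sqrt (C * \<epsilon>)))"
proof -
  have \<nu>: "prob_space (cond_dist \<mu> a)" "sets (cond_dist \<mu> a) = sets sample_space"
    and Y: "AE \<omega> in cond_dist \<mu> a. \<bar>snd (snd \<omega>)\<bar> \<le> 1" for a
    using prob_space_cond_dist[OF assms(1,2)] AE_cond_dist[OF assms(1,2) _ assms(5)] assms(2-4)
    by (cases a; simp)+
  have distrib: "real_distribution (push (cond_dist \<mu> a) g)" if "g \<in> borel_measurable borel" for a g
    using real_distribution_push[OF \<nu> that] .
  \<comment> \<open>The only use of \<open>\<bar>Y\<bar> \<le> 1\<close>: finite optimal errors make the subtractions in \<open>excess_risk\<close> meaningful.\<close>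
  have opt_finite: "opt_lp_error p (cond_dist \<mu> a) \<noteq> \<infinity>" for a
    using opt_lp_error_le_1[OF \<nu>(1) Y, of p a] assms(6) by (auto simp: top_unique)
  let ?F0 = "push (cond_dist \<mu> False) f0" and ?F1 = "push (cond_dist \<mu> True) f1"
  let ?H0 = "push (cond_dist \<mu> False) h" and ?H1 = "push (cond_dist \<mu> True) h"
  have "wasserstein p ?F0 ?F1 \<le> wasserstein p ?F0 ?H0 + wasserstein p ?H0 ?F1"
    by (intro wasserstein_triangle distrib assms(6,7,9,11))
  also have "\<dots> \<le> wasserstein p ?F0 ?H0 + (wasserstein p ?H0 ?H1 + wasserstein p ?H1 ?F1)"
    by (intro add_left_mono wasserstein_triangle distrib assms(6,9,11))
  also have "\<dots> \<le> (opt_lp_error p (cond_dist \<mu> False) + lp_error p (cond_dist \<mu> False) h)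
      + (ennreal \<epsilon> + (lp_error p (cond_dist \<mu> True) h + opt_lp_error p (cond_dist \<mu> True)))"
    using wasserstein_push_le_lp_error[OF \<nu> assms(7) assms(11) assms(6)]
      wasserstein_push_le_lp_error[OF \<nu> assms(11) assms(9) assms(6)] assms(13)
    by (intro add_mono) (simp_all flip: assms(8,10))
  finally have W: "wasserstein p ?F0 ?F1 \<le> (opt_lp_error p (cond_dist \<mu> False) + lp_error p (cond_dist \<mu> False) h)
      + ennreal \<epsilon> + (lp_error p (cond_dist \<mu> True) h + opt_lp_error p (cond_dist \<mu> True))"
    by (simp add: add.assoc)
  have \<epsilon>: "\<epsilon> \<ge> 0"
    using assms(12) by simp
  note parity = statistical_parity_of_wasserstein_le[OF \<nu> \<nu> assms(11,6) \<epsilon> assms(13), unfolded space_cond_dist]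
  show ?thesis
    unfolding excess_risk_def using enn2ereal_excess_sum_ge[OF W opt_finite opt_finite \<epsilon>] parity by blast
qed

end
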